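(* Let $(a_0,\ldots,a_n)$ be a finite sequence of positive integers. For every $\varepsilon>0$ there is $m_0>0$ such that for every integer $m\ge m_0$ and every positive integer $N$, $$\Phi^1(\beta^{N+1})-\Phi^1(\beta^N)<\frac{\varepsilon}{2}.$$
   Context: For positive integers $d_0,d_1,\ldots$, $[d_0,d_1,d_2,\ldots]$ denotes the continued fraction $\cfrac{1}{d_0+\cfrac{1}{d_1+\cfrac{1}{d_2+\cdots}}}$, and for $\beta=[d_0,d_1,\ldots]$ we write $\alpha_j(\beta)=[d_j,d_{j+1},\ldots]$. For integers $m\ge1$, $N\ge1$, $\beta^N$ is the number whose digits (indexed from $0$) are $a_0,\ldots,a_n$ in positions $0,\ldots,n$, $N$ in position $n+m$, and $1$ in all other positions. For such $\beta$ (with $m$ fixed), $\Phi^1(\beta)=\alpha_0(\beta)\alpha_1(\beta)\cdots\alpha_{n+m-1}(\beta)\log\frac{1}{\alpha_{n+m}(\beta)}$. *)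

theory Defs
  imports Complex_Main
begin

fun cf_fin :: "(nat \<Rightarrow> nat) \<Rightarrow> nat \<Rightarrow> real" where
  "cf_fin d 0 = 0"
| "cf_fin d (Suc k) = 1 / (real (d 0) + cf_fin (\<lambda>i. d (Suc i)) k)"

definition cf :: "(nat \<Rightarrow> nat) \<Rightarrow> real" where
  "cf d = lim (\<lambda>k. cf_fin d k)"

definition alpha :: "nat \<Rightarrow> (nat \<Rightarrow> nat) \<Rightarrow> real" where
  "alpha j d = cf (\<lambda>i. d (i + j))"

text \<open>Digit sequence of beta^N: a_0..a_n at positions 0..n, N at position n+m, 1 elsewhere.\<close>
definition beta_digits :: "(nat \<Rightarrow> nat) \<Rightarrow> nat \<Rightarrow> nat \<Rightarrow> nat \<Rightarrow> nat \<Rightarrow> nat" where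
  "beta_digits a n m N i = (if i \<le> n then a i else if i = n + m then N else 1)"

definition Phi1 :: "nat \<Rightarrow> nat \<Rightarrow> (nat \<Rightarrow> nat) \<Rightarrow> real" where
  "Phi1 n m d = (\<Prod>j<n + m. alpha j d) * ln (1 / alpha (n + m) d)"

end

theory Submission
  imports Defs
begin

text \<open>All digits of beta^N after position K = n + m equal 1, so alpha_K = 1 / (N + g) with
  g = (sqrt 5 - 1) / 2, the value of [1, 1, 1, ...]. The continuant identity
  alpha_0 ... alpha_(K-1) = 1 / (q_(K+1) + alpha_K q_K) then gives
  Phi^1(beta^N) = f (N + g) for f t = ln t / (A + B / t), where A = q_(K+1) >= B = q_K are
  continuants of the first K digits and do not depend on N. An elementary estimate yields
  f (t + 1) - f t <= 2 / A, and A >= (K + 1) / 2 >= (m + 1) / 2 because all digits are positive.\<close>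

lemma cf_fin_nonneg: "cf_fin d k \<ge> 0"
  by (induction k arbitrary: d) auto

lemma cf_fin_limit_nonneg: "(\<lambda>k. cf_fin d k) \<longlonglongrightarrow> L \<Longrightarrow> L \<ge> 0"
  by (rule LIMSEQ_le_const) (auto intro: cf_fin_nonneg)

lemma cf_fin_Cons_tendsto:
  assumes "(\<lambda>k. cf_fin (\<lambda>i. d (Suc i)) k) \<longlonglongrightarrow> L" and "real (d 0) + L \<noteq> 0"
  shows "(\<lambda>k. cf_fin d k) \<longlonglongrightarrow> 1 / (real (d 0) + L)"
proof (rule LIMSEQ_imp_Suc)
  show "(\<lambda>k. cf_fin d (Suc k)) \<longlonglongrightarrow> 1 / (real (d 0) + L)"
    using assms by (auto intro!: tendsto_intros)
qed

definition inv_golden_ratio :: real where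
  "inv_golden_ratio = (sqrt 5 - 1) / 2"

lemma inv_golden_ratio_pos: "inv_golden_ratio > 0"
  unfolding inv_golden_ratio_def by (simp add: real_less_rsqrt)

lemma inv_golden_ratio_less_1: "inv_golden_ratio < 1"
proof -
  have "sqrt 5 < sqrt 9" by (simp only: real_sqrt_less_iff)
  then show ?thesis unfolding inv_golden_ratio_def by simp
qed

lemma inv_golden_ratio_fixpoint: "1 / (1 + inv_golden_ratio) = inv_golden_ratio"
proof -
  have "inv_golden_ratio * (1 + inv_golden_ratio) = 1"
    unfolding inv_golden_ratio_def by (simp add: field_simps)
  then show ?thesis
    using inv_golden_ratio_pos by (simp add: field_simps)
qed

lemma cf_fin_ones_error:
  "\<bar>cf_fin (\<lambda>_. 1) k - inv_golden_ratio\<bar> \<le> inv_golden_ratio ^ Suc k"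
proof (induction k)
  case 0
  then show ?case using inv_golden_ratio_pos by simp
next
  case (Suc k)
  define x where "x = cf_fin (\<lambda>_. 1) k"
  let ?g = inv_golden_ratio
  have x: "x \<ge> 0" and g: "?g > 0"
    unfolding x_def by (simp_all add: cf_fin_nonneg inv_golden_ratio_pos)
  \<comment> \<open>the map x \<mapsto> 1/(1+x) contracts towards its fixpoint by the factor g\<close>
  have "cf_fin (\<lambda>_. 1) (Suc k) - ?g = 1 / (1 + x) - 1 / (1 + ?g)"
    unfolding x_def inv_golden_ratio_fixpoint by simp
  also have "\<dots> = (?g - x) * (1 / (1 + ?g)) / (1 + x)"
    using x g by (simp add: field_simps)
  also have "\<dots> = (?g - x) * ?g / (1 + x)"
    by (simp only: inv_golden_ratio_fixpoint)
  finally have "\<bar>cf_fin (\<lambda>_. 1) (Suc k) - ?g\<bar> = \<bar>x - ?g\<bar> * ?g / (1 + x)"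
    using x g by (simp add: abs_mult abs_minus_commute)
  also have "\<dots> \<le> \<bar>x - ?g\<bar> * ?g"
    using x g by (intro mult_imp_div_pos_le) (simp_all add: algebra_simps)
  also have "\<dots> \<le> ?g ^ Suc k * ?g"
    using Suc.IH g unfolding x_def by (simp add: mult_right_mono)
  finally show ?case by (simp add: mult_ac)
qed

lemma cf_fin_ones_tendsto: "(\<lambda>k. cf_fin (\<lambda>_. 1) k) \<longlonglongrightarrow> inv_golden_ratio"
proof -
  have "(\<lambda>k. inv_golden_ratio ^ k) \<longlonglongrightarrow> 0"
    using inv_golden_ratio_pos inv_golden_ratio_less_1 by (intro LIMSEQ_power_zero) simp
  then have "(\<lambda>k. cf_fin (\<lambda>_. 1) k - inv_golden_ratio) \<longlonglongrightarrow> 0"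
    by (rule tendsto_0_le[where K = inv_golden_ratio])
       (use cf_fin_ones_error inv_golden_ratio_pos in \<open>auto simp: mult.commute\<close>)
  then show ?thesis by (simp add: LIM_zero_iff)
qed

lemma alpha_eqI: "(\<lambda>k. cf_fin (\<lambda>i. d (i + j)) k) \<longlonglongrightarrow> L \<Longrightarrow> alpha j d = L"
  unfolding alpha_def cf_def by (rule limI)

lemma cf_tail_step_tendsto:
  assumes "d j \<ge> 1" and "(\<lambda>k. cf_fin (\<lambda>i. d (i + Suc j)) k) \<longlonglongrightarrow> L"
  shows "(\<lambda>k. cf_fin (\<lambda>i. d (i + j)) k) \<longlonglongrightarrow> 1 / (real (d j) + L)"
proof -
  have "real (d j) + L \<noteq> 0"
    using assms cf_fin_limit_nonneg[OF assms(2)] by simp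
  then show ?thesis
    using assms(2) cf_fin_Cons_tendsto[of "\<lambda>i. d (i + j)" L] by simp
qed

lemma cf_tail_tendsto_alpha:
  assumes digits: "\<And>i. d i \<ge> 1"
    and tail: "(\<lambda>k. cf_fin (\<lambda>i. d (i + J)) k) \<longlonglongrightarrow> L" and "j \<le> J"
  shows "(\<lambda>k. cf_fin (\<lambda>i. d (i + j)) k) \<longlonglongrightarrow> alpha j d"
  using \<open>j \<le> J\<close>
proof (induction j rule: inc_induct)
  case base
  show ?case using tail alpha_eqI[OF tail] by simp
next
  case (step j)
  then have "(\<lambda>k. cf_fin (\<lambda>i. d (i + j)) k) \<longlonglongrightarrow> 1 / (real (d j) + alpha (Suc j) d)"
    using digits by (intro cf_tail_step_tendsto)
  then show ?case using alpha_eqI by metis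
qed

lemma alpha_recurrence:
  assumes digits: "\<And>i. d i \<ge> 1"
    and tail: "(\<lambda>k. cf_fin (\<lambda>i. d (i + J)) k) \<longlonglongrightarrow> L" and "j < J"
  shows "alpha j d = 1 / (real (d j) + alpha (Suc j) d)"
proof (rule alpha_eqI, rule cf_tail_step_tendsto)
  show "(\<lambda>k. cf_fin (\<lambda>i. d (i + Suc j)) k) \<longlonglongrightarrow> alpha (Suc j) d"
    using assms by (intro cf_tail_tendsto_alpha) auto
qed (use digits in auto)

text \<open>The continuants: with this indexing, cf_den d (Suc k) is the denominator of the
  convergent cf_fin d k, and cf_den d 0 = 0 plays the role of q_(-1).\<close>

fun cf_den :: "(nat \<Rightarrow> nat) \<Rightarrow> nat \<Rightarrow> nat" where
  "cf_den d 0 = 0"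
| "cf_den d (Suc 0) = 1"
| "cf_den d (Suc (Suc k)) = d k * cf_den d (Suc k) + cf_den d k"

lemma cf_den_cong: "(\<And>i. Suc i < k \<Longrightarrow> d i = e i) \<Longrightarrow> cf_den d k = cf_den e k"
  by (induction d k rule: cf_den.induct) auto

lemma cf_den_Suc_Suc_ge:
  assumes "d k \<ge> 1"
  shows "cf_den d (Suc k) + cf_den d k \<le> cf_den d (Suc (Suc k))"
  using mult_le_mono1[OF assms, of "cf_den d (Suc k)"] by simp

lemma cf_den_le_Suc:
  assumes "\<And>i. d i \<ge> 1"
  shows "cf_den d k \<le> cf_den d (Suc k)"
proof (cases k)
  case (Suc k')
  have "cf_den d (Suc k') \<le> cf_den d (Suc (Suc k'))"
    using cf_den_Suc_Suc_ge[of d k', OF assms] by linarith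
  then show ?thesis using Suc by simp
qed simp

lemma cf_den_Suc_pos:
  assumes "\<And>i. d i \<ge> 1"
  shows "cf_den d (Suc k) \<ge> 1"
proof (induction k)
  case (Suc k)
  then show ?case using cf_den_le_Suc[of d "Suc k", OF assms] by linarith
qed simp

lemma Suc_le_twice_cf_den:
  assumes digits: "\<And>i. d i \<ge> 1"
  shows "Suc k \<le> 2 * cf_den d (Suc k)"
proof (induction k)
  case (Suc k)
  have step: "cf_den d (Suc k) + cf_den d k \<le> cf_den d (Suc (Suc k))"
    using cf_den_Suc_Suc_ge[of d k, OF digits] .
  show ?case
  proof (cases k)
    case 0
    then show ?thesis using cf_den_le_Suc[of d 1, OF digits] by simp
  next
    case (Suc k')
    then have "cf_den d k \<ge> 1" using cf_den_Suc_pos[of d, OF digits] by simp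
    then show ?thesis using Suc.IH step by linarith
  qed
qed simp

lemma prod_mult_cf_den:
  fixes x :: "nat \<Rightarrow> real"
  assumes "\<And>j. j < K \<Longrightarrow> x j * (real (d j) + x (Suc j)) = 1" and "k \<le> K"
  shows "(\<Prod>j<k. x j) * (real (cf_den d (Suc k)) + x k * real (cf_den d k)) = 1"
  using \<open>k \<le> K\<close>
proof (induction k)
  case (Suc k)
  have "(\<Prod>j<Suc k. x j) * (real (cf_den d (Suc (Suc k))) + x (Suc k) * real (cf_den d (Suc k)))
      = (\<Prod>j<k. x j) * (x k * (real (d k) + x (Suc k)) * real (cf_den d (Suc k))
          + x k * real (cf_den d k))"
    by (simp add: algebra_simps)
  also have "\<dots> = 1"
    using assms(1)[of k] Suc by simp
  finally show ?case .
qed simp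

lemma prod_alpha_eq:
  assumes digits: "\<And>i. d i \<ge> 1"
    and tail: "(\<lambda>k. cf_fin (\<lambda>i. d (i + K)) k) \<longlonglongrightarrow> L"
  shows "(\<Prod>j<K. alpha j d) = 1 / (real (cf_den d (Suc K)) + alpha K d * real (cf_den d K))"
proof -
  have "alpha j d * (real (d j) + alpha (Suc j) d) = 1" if "j < K" for j
  proof -
    have "alpha (Suc j) d \<ge> 0"
      using cf_fin_limit_nonneg[OF cf_tail_tendsto_alpha[OF digits tail, of "Suc j"]] that
      by simp
    then show ?thesis
      using alpha_recurrence[OF assms that] digits[of j] by simp
  qed
  from prod_mult_cf_den[where x = "\<lambda>j. alpha j d", OF this order.refl] show ?thesis
    by (simp add: eq_divide_eq) (metis mult_zero_right zero_neq_one)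
qed

lemma ln_div_affine_step_le:
  fixes A B t :: real
  assumes A: "A > 0" and B: "0 \<le> B" "B \<le> A" and t: "t \<ge> 1"
  shows "ln (t + 1) / (A + B / (t + 1)) - ln t / (A + B / t) \<le> 2 / A"
proof -
  have "ln (t + 1) / (A + B / (t + 1)) \<le> ln (t + 1) / A"
    using A B t by (intro divide_left_mono) (auto intro!: mult_pos_pos add_pos_nonneg)
  moreover have "ln (t + 1) - ln t \<le> 1"
  proof -
    have "ln (t + 1) - ln t = ln ((t + 1) / t)"
      using t by (simp add: ln_div)
    also have "\<dots> \<le> (t + 1) / t - 1"
      using t by (intro ln_le_minus_one) simp
    also have "\<dots> = 1 / t"
      using t by (simp add: field_simps)
    also have "\<dots> \<le> 1"
      using t by simp
    finally show ?thesis .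
  qed
  then have "ln (t + 1) / A - ln t / A \<le> 1 / A"
    using A by (simp add: diff_divide_distrib[symmetric] divide_right_mono)
  moreover have "ln t / A - ln t / (A + B / t) \<le> 1 / A"
  proof -
    have "A * t + B > 0"
      using A B t by (intro add_pos_nonneg mult_pos_pos) auto
    then have "ln t / A - ln t / (A + B / t) = ln t * B / (A * (A * t + B))"
      using A t by (simp add: field_simps)
    also have "\<dots> \<le> ln t * A / (A * (A * t))"
      using A B t by (intro frac_le mult_left_mono) auto
    also have "\<dots> = (ln t / t) / A"
      using A t by simp
    also have "\<dots> \<le> 1 / A"
    proof -
      have "ln t \<le> t"
        using t by (intro less_imp_le ln_less_self) simp
      then have "ln t / t \<le> 1"
        using t by simp
      then show ?thesis
        by (rule divide_right_mono) (use A in simp)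
    qed
    finally show ?thesis .
  qed
  ultimately show ?thesis by simp
qed

lemma beta_digits_ge_1:
  assumes "\<forall>i\<le>n. a i > 0" and "N > 0"
  shows "beta_digits a n m N i \<ge> 1"
  using assms unfolding beta_digits_def by (auto simp: Suc_le_eq)

text \<open>The continuants only involve the digits before position n + m, which do not depend on N;
  they are therefore taken from beta_digits a n m 1.\<close>

lemma Phi1_beta_digits_eq:
  assumes apos: "\<forall>i\<le>n. a i > 0" and "m \<ge> 1" and "N > 0"
  defines "q \<equiv> cf_den (beta_digits a n m 1)" and "t \<equiv> real N + inv_golden_ratio"
  shows "Phi1 n m (beta_digits a n m N) = ln t / (real (q (Suc (n + m))) + real (q (n + m)) / t)"
proof -
  define K where "K = n + m"
  define D where "D = beta_digits a n m N"
  have digits: "\<And>i. D i \<ge> 1"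
    unfolding D_def using beta_digits_ge_1[OF apos \<open>N > 0\<close>] .
  have "(\<lambda>i. D (i + Suc K)) = (\<lambda>_. 1)" and "D K = N"
    unfolding D_def K_def beta_digits_def using \<open>m \<ge> 1\<close> by auto
  then have tail: "(\<lambda>k. cf_fin (\<lambda>i. D (i + K)) k) \<longlonglongrightarrow> 1 / t"
    using cf_tail_step_tendsto[of D K, OF digits] cf_fin_ones_tendsto
    unfolding t_def by simp
  have t: "t > 0"
    unfolding t_def using inv_golden_ratio_pos by simp
  have "cf_den D k = q k" if "k \<le> Suc K" for k
    using that unfolding D_def q_def K_def by (intro cf_den_cong) (auto simp: beta_digits_def)
  then have q: "cf_den D K = q K" "cf_den D (Suc K) = q (Suc K)"
    by simp_all
  have "Phi1 n m D = (\<Prod>j<K. alpha j D) * ln t"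
    unfolding Phi1_def K_def[symmetric] alpha_eqI[OF tail] using t by (simp add: ln_div)
  also have "\<dots> = ln t / (real (q (Suc K)) + real (q K) / t)"
    unfolding prod_alpha_eq[OF digits tail] alpha_eqI[OF tail] q
    by simp
  finally show ?thesis unfolding D_def K_def .
qed

lemma Phi1_beta_digits_step_le:
  assumes apos: "\<forall>i\<le>n. a i > 0" and "m \<ge> 1" and "N > 0"
  shows "Phi1 n m (beta_digits a n m (N + 1)) - Phi1 n m (beta_digits a n m N) \<le> 4 / (real m + 1)"
proof -
  define q where "q = cf_den (beta_digits a n m 1)"
  define t where "t = real N + inv_golden_ratio"
  have digits: "\<And>i. beta_digits a n m 1 i \<ge> 1"
    using beta_digits_ge_1[OF apos] by simp
  have "q (n + m) \<le> q (Suc (n + m))" and A: "Suc (n + m) \<le> 2 * q (Suc (n + m))"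
    unfolding q_def using cf_den_le_Suc[OF digits] Suc_le_twice_cf_den[OF digits] by auto
  moreover have "t \<ge> 1"
    unfolding t_def using \<open>N > 0\<close> inv_golden_ratio_pos by simp
  ultimately have "ln (t + 1) / (real (q (Suc (n + m))) + real (q (n + m)) / (t + 1))
      - ln t / (real (q (Suc (n + m))) + real (q (n + m)) / t) \<le> 2 / real (q (Suc (n + m)))"
    by (intro ln_div_affine_step_le) auto
  also have "\<dots> \<le> 4 / (real m + 1)"
    using A by (simp add: field_simps)
  finally show ?thesis
    using Phi1_beta_digits_eq[OF assms] Phi1_beta_digits_eq[OF apos \<open>m \<ge> 1\<close>, of "N + 1"]
    unfolding q_def t_def by (simp add: add.commute add.left_commute)
qed

theorem mainTheorem8:
  fixes a :: "nat \<Rightarrow> nat" and n :: nat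
  assumes "\<forall>i\<le>n. a i > 0"
  shows "\<forall>\<epsilon>>0. \<exists>m0::nat. m0 > 0 \<and> (\<forall>m\<ge>m0. \<forall>N::nat. N > 0 \<longrightarrow>
           Phi1 n m (beta_digits a n m (N + 1)) - Phi1 n m (beta_digits a n m N) < \<epsilon> / 2)"
proof (intro allI impI)
  fix \<epsilon> :: real
  assume "\<epsilon> > 0"
  define m0 where "m0 = nat \<lceil>8 / \<epsilon>\<rceil> + 1"
  show "\<exists>m0::nat. m0 > 0 \<and> (\<forall>m\<ge>m0. \<forall>N::nat. N > 0 \<longrightarrow>
           Phi1 n m (beta_digits a n m (N + 1)) - Phi1 n m (beta_digits a n m N) < \<epsilon> / 2)"
  proof (intro exI[of _ m0] conjI allI impI)
    show "m0 > 0" unfolding m0_def by simp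
    fix m N :: nat
    assume "m0 \<le> m" and "N > 0"
    then have "m \<ge> 1" and "8 / \<epsilon> < real m + 1"
      unfolding m0_def by linarith+
    then have "4 / (real m + 1) < \<epsilon> / 2"
      using \<open>\<epsilon> > 0\<close> by (simp add: field_simps)
    with Phi1_beta_digits_step_le[OF assms \<open>m \<ge> 1\<close> \<open>N > 0\<close>]
    show "Phi1 n m (beta_digits a n m (N + 1)) - Phi1 n m (beta_digits a n m N) < \<epsilon> / 2"
      by linarith
  qed
qed

end
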